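(* Let $X$ be a compact $\ell_1$-convex subset of $\mathbb{R}^n$. Then for $0\le j\le k\le n$, \[ \sum_{P\in G_{n,k}} V_j(\pi_PX)=\binom{n-j}{n-k}V_j(X). \]
   Context: A subset $X\subseteq\mathbb{R}^n$ is $\ell_1$-convex if any two points $x,x'\in X$ are joined by a map $\gamma\colon[0,D]\to X$, $D=\sum_i|x_i-x'_i|$, with $\gamma(0)=x,\gamma(D)=x'$, which is distance-preserving for the $\ell_1$ metric $d(x,y)=\sum_i|x_i-y_i|$. $G_{n,k}$ is the set of $k$-dimensional coordinate subspaces of $\mathbb{R}^n$ (spanned by $k$ of the standard basis vectors), and $\pi_P$ is orthogonal projection onto $P$. For a compact $\ell_1$-convex set $Y$ in a coordinate subspace (or in $\mathbb{R}^n$), $V_j(Y)=\sum_{R\in G_{n,j}}\mathrm{Vol}_j(\pi_RY)$, the $j$th $\ell_1$-intrinsic volume, where $\mathrm{Vol}_j$ is Lebesgue measure on $R$; this value does not depend on the ambient coordinate space in which $Y$ is regarded. *)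

theory Defs
  imports "HOL-Analysis.Analysis"
begin

text \<open>Points of R^n are vectors real^'n, n = CARD('n). A coordinate subspace is
  identified with the set S of coordinates spanning it.\<close>

definition l1dist :: "real^'n \<Rightarrow> real^'n \<Rightarrow> real" where
  "l1dist x y = (\<Sum>i\<in>UNIV. \<bar>x $ i - y $ i\<bar>)"

definition l1_convex :: "(real^'n) set \<Rightarrow> bool" where
  "l1_convex X \<longleftrightarrow> (\<forall>x\<in>X. \<forall>x'\<in>X. \<exists>\<gamma> :: real \<Rightarrow> real^'n.
      \<gamma> 0 = x \<and> \<gamma> (l1dist x x') = x' \<and> \<gamma> ` {0..l1dist x x'} \<subseteq> X \<and>
      (\<forall>s\<in>{0..l1dist x x'}. \<forall>t\<in>{0..l1dist x x'}. l1dist (\<gamma> s) (\<gamma> t) = \<bar>s - t\<bar>))"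

definition coord_subspaces :: "nat \<Rightarrow> 'n::finite set set" where
  "coord_subspaces k = {S. card S = k}"

definition coord_proj :: "'n::finite set \<Rightarrow> real^'n \<Rightarrow> real^'n" where
  "coord_proj S x = (\<chi> i. if i \<in> S then x $ i else 0)"

text \<open>Vol_j on the coordinate subspace R (with card R = j): Lebesgue measure on R,
  realized via the coordinate identification R ~ (R \<rightarrow> real) with the product of
  Lebesgue measures.\<close>
definition coord_vol :: "'n::finite set \<Rightarrow> (real^'n) set \<Rightarrow> real" where
  "coord_vol R Y = measure (PiM R (\<lambda>_. lborel)) ((\<lambda>x. restrict (\<lambda>i. x $ i) R) ` Y)"

definition l1_intrinsic_volume :: "nat \<Rightarrow> (real^'n::finite) set \<Rightarrow> real" where
  "l1_intrinsic_volume j Y = (\<Sum>R\<in>coord_subspaces j. coord_vol R (coord_proj R ` Y))"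

end

theory Submission
  imports Defs
begin

text \<open>Projecting \<open>\<pi>\<^sub>P X\<close> further onto a coordinate subspace \<open>R\<close> gives \<open>\<pi>\<^sub>R X\<close> when \<open>R \<subseteq> P\<close>,
  and a set lying in a hyperplane \<open>x\<^sub>i = 0\<close> with \<open>i \<in> R\<close> otherwise, which has \<open>j\<close>-volume zero.
  Hence \<open>V\<^sub>j(\<pi>\<^sub>P X)\<close> is the sum of \<open>Vol\<^sub>j(\<pi>\<^sub>R X)\<close> over the \<open>j\<close>-subsets \<open>R\<close> of \<open>P\<close>, and exchanging
  the two sums leaves each \<open>R\<close> counted once for each of its \<open>binom(n-j, k-j)\<close> supersets of size \<open>k\<close>.\<close>

lemma coord_proj_coord_proj_subset:
  "R \<subseteq> P \<Longrightarrow> coord_proj R (coord_proj P x) = coord_proj R x"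
  unfolding coord_proj_def by (auto simp: vec_eq_iff)

lemma coord_vol_eq_0_if_coordinate_vanishes:
  fixes Y :: "(real^'n) set"
  assumes "i \<in> R" and "\<And>y. y \<in> Y \<Longrightarrow> y $ i = 0"
  shows "coord_vol R Y = 0"
proof -
  let ?M = "PiM R (\<lambda>_. lborel :: real measure)"
  let ?A = "(\<lambda>x. restrict (\<lambda>l. x $ l) R) ` Y"
  let ?H = "PiE R (\<lambda>l. if l = i then {0::real} else UNIV)"
  have "?A \<subseteq> ?H"
    using assms(2) by auto
  have "emeasure ?M ?H = (\<Prod>l\<in>R. emeasure lborel (if l = i then {0::real} else UNIV))"
    by (rule product_sigma_finite.emeasure_PiM)
      (auto simp: product_sigma_finite_def lborel.sigma_finite_measure_axioms)
  also have "\<dots> = 0"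
    using assms(1) by (intro prod_zero) auto
  finally have "?H \<in> null_sets ?M"
    by (auto intro: sets_PiM_I_finite)
  show ?thesis
  proof (cases "?A \<in> sets ?M")
    case True
    with null_sets_subset[OF \<open>?H \<in> null_sets ?M\<close> True \<open>?A \<subseteq> ?H\<close>] show ?thesis
      unfolding coord_vol_def measure_def by (simp add: null_setsD1)
  next
    case False
    then show ?thesis
      unfolding coord_vol_def by (simp add: measure_notin_sets)
  qed
qed

lemma coord_vol_coord_proj_coord_proj:
  "coord_vol R (coord_proj R ` coord_proj P ` X)
     = (if R \<subseteq> P then coord_vol R (coord_proj R ` X) else 0)"
proof (cases "R \<subseteq> P")
  case True
  then show ?thesis
    by (simp add: image_image coord_proj_coord_proj_subset)
next
  case False
  then obtain i where "i \<in> R" "i \<notin> P" by auto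
  then show ?thesis
    by (auto intro!: coord_vol_eq_0_if_coordinate_vanishes simp: coord_proj_def)
qed

lemma l1_intrinsic_volume_coord_proj:
  "l1_intrinsic_volume j (coord_proj P ` X)
     = (\<Sum>R\<in>coord_subspaces j. if R \<subseteq> P then coord_vol R (coord_proj R ` X) else 0)"
  unfolding l1_intrinsic_volume_def by (simp add: coord_vol_coord_proj_coord_proj)

lemma card_coord_subspaces_supersets:
  fixes R :: "'n::finite set"
  assumes "card R = j" "j \<le> k" "k \<le> CARD('n)"
  shows "card {P \<in> coord_subspaces k. R \<subseteq> P} = (CARD('n) - j) choose (CARD('n) - k)"
proof -
  have "bij_betw (\<lambda>P. P - R) {P \<in> coord_subspaces k. R \<subseteq> P} {B. B \<subseteq> - R \<and> card B = k - j}"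
  proof (rule bij_betw_byWitness[where f'="\<lambda>B. B \<union> R"])
    show "(\<lambda>P. P - R) ` {P \<in> coord_subspaces k. R \<subseteq> P} \<subseteq> {B. B \<subseteq> - R \<and> card B = k - j}"
      using assms by (auto simp: coord_subspaces_def card_Diff_subset)
    show "(\<lambda>B. B \<union> R) ` {B. B \<subseteq> - R \<and> card B = k - j} \<subseteq> {P \<in> coord_subspaces k. R \<subseteq> P}"
      using assms by (auto simp: coord_subspaces_def card_Un_disjoint disjoint_eq_subset_Compl)
  qed auto
  then have "card {P \<in> coord_subspaces k. R \<subseteq> P} = card {B. B \<subseteq> - R \<and> card B = k - j}"
    by (rule bij_betw_same_card)
  also have "\<dots> = card (- R) choose (k - j)"
    by (rule n_subsets) simp
  also have "card (- R) = CARD('n) - j"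
    using assms(1) card_Diff_subset[of R UNIV] by (simp add: Compl_eq_Diff_UNIV)
  also have "(CARD('n) - j) choose (k - j) = (CARD('n) - j) choose (CARD('n) - k)"
    using assms by (subst binomial_symmetric) (auto simp: diff_diff_eq)
  finally show ?thesis .
qed

theorem theorem7p2:
  fixes X :: "(real^'n) set" and j k :: nat
  assumes "compact X" and "l1_convex X"
    and "j \<le> k" and "k \<le> CARD('n)"
  shows "(\<Sum>P\<in>coord_subspaces k. l1_intrinsic_volume j (coord_proj P ` X))
         = real ((CARD('n) - j) choose (CARD('n) - k)) * l1_intrinsic_volume j X"
proof -
  define v where "v R = coord_vol R (coord_proj R ` X)" for R :: "'n set"
  have "(\<Sum>P\<in>coord_subspaces k. l1_intrinsic_volume j (coord_proj P ` X))
      = (\<Sum>R\<in>coord_subspaces j. \<Sum>P\<in>coord_subspaces k. if R \<subseteq> P then v R else 0)"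
    unfolding l1_intrinsic_volume_coord_proj v_def by (rule sum.swap)
  also have "\<dots> = (\<Sum>R\<in>coord_subspaces j. real (card {P \<in> coord_subspaces k. R \<subseteq> P}) * v R)"
    by (simp add: sum.inter_filter[symmetric])
  also have "\<dots> = (\<Sum>R\<in>coord_subspaces j. real ((CARD('n) - j) choose (CARD('n) - k)) * v R)"
    using card_coord_subspaces_supersets[OF _ assms(3,4)]
    by (intro sum.cong) (auto simp: coord_subspaces_def)
  also have "\<dots> = real ((CARD('n) - j) choose (CARD('n) - k)) * l1_intrinsic_volume j X"
    unfolding l1_intrinsic_volume_def v_def by (simp add: sum_distrib_left)
  finally show ?thesis .
qed

end
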